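(* Let $N\in\mathbb{N}$, $m,M\in(0,1)$ with $m<M$, and $a_1,\dots,a_N\in[m,M]$. For $i\in[N]$ let $M_i=\frac1N\min\{m+(N-1)M,\ (N-2)(a_i-m)+\sum_{j=1}^Na_j\}$. Let $P$ be the intersection of the box $C=[m,M_1]\times\cdots\times[m,M_N]$ with the closed half-spaces $H_i=\{z\in\mathbb{R}^N\mid\sum_{j=1}^Nz_j\le(2N-2)z_i-(N-2)m\}$, $i\in[N]$. Then $P$ is a closed convex polytope in $\mathbb{R}^N$. For $N>2$, $P$ has at most $2^N$ vertices, and its vertices are exactly the points $z^{(K)}$, $K\subseteq[N]$, defined by $z^{(K)}_k=B^{(K)}$ if $k\in K$ and $z^{(K)}_k=M_k$ if $k\in[N]\setminus K$, where $B^{(K)}=\frac{(N-2)m+\sum_{l\in[N]\setminus K}M_l}{2N-2-|K|}$. For $N=1$, $P=\{m\}$, and for $N=2$, $P=\{(t,t)\in\mathbb{R}^2\mid m\le t\le M_1\}$.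
   Context: $[N]=\{1,\dots,N\}$. *)

theory Defs
  imports "HOL-Analysis.Analysis"
begin

text \<open>Coordinates are indexed by a finite type 'n playing the role of [N]; N = CARD('n).\<close>

definition upperM :: "real \<Rightarrow> real \<Rightarrow> (real^'n) \<Rightarrow> 'n \<Rightarrow> real" where
  "upperM m M a i = (1 / real CARD('n)) *
     min (m + (real CARD('n) - 1) * M)
         ((real CARD('n) - 2) * (a $ i - m) + (\<Sum>j\<in>UNIV. a $ j))"

definition polyP :: "real \<Rightarrow> real \<Rightarrow> (real^'n) \<Rightarrow> (real^'n) set" where
  "polyP m M a =
     {z. \<forall>k. m \<le> z $ k \<and> z $ k \<le> upperM m M a k}
     \<inter> (\<Inter>i\<in>UNIV. {z. (\<Sum>j\<in>UNIV. z $ j)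
                          \<le> (2 * real CARD('n) - 2) * z $ i - (real CARD('n) - 2) * m})"

definition Bval :: "real \<Rightarrow> real \<Rightarrow> (real^'n) \<Rightarrow> 'n set \<Rightarrow> real" where
  "Bval m M a K = ((real CARD('n) - 2) * m + (\<Sum>l\<in>UNIV - K. upperM m M a l))
                  / (2 * real CARD('n) - 2 - real (card K))"

definition zK :: "real \<Rightarrow> real \<Rightarrow> (real^'n) \<Rightarrow> 'n set \<Rightarrow> real^'n" where
  "zK m M a K = (\<chi> k. if k \<in> K then Bval m M a K else upperM m M a k)"

end

theory Submission
  imports Defs
begin

text \<open>
  Write the half-space \<open>H\<^sub>i\<close> as \<open>z\<^sub>i \<ge> \<beta>(z) = (\<Sum>z + (N-2)m)/(2N-2)\<close>. Summing all
  \<open>H\<^sub>i\<close> gives \<open>\<Sum>z \<ge> N m\<close>, so for \<open>N > 2\<close> the lower bounds \<open>z\<^sub>k \<ge> m\<close> are redundant, and the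
  vector \<open>u\<close> of upper bounds \<open>M\<^sub>k\<close> lies in every \<open>H\<^sub>i\<close>. At an extreme point \<open>v\<close> every
  coordinate is tight at its upper bound or at its half-space: otherwise that coordinate
  can be moved both ways, dragging along the coordinates of the tight half-spaces so
  that they stay tight (these are below their upper bounds because \<open>u\<close> lies in \<open>H\<^sub>j\<close>).
  With \<open>K\<close> the set of coordinates below their upper bound, all \<open>v\<^sub>k\<close>, \<open>k \<in> K\<close>, equal
  \<open>\<beta>(v)\<close>, and this linear equation has the solution \<open>B\<^bsup>(K)\<^esup>\<close>. Conversely, the constraints
  tight at \<open>z\<^bsup>(K)\<^esup>\<close> stay tight along any segment through it and determine the point.
  For \<open>N = 2\<close> the slacks of the two half-spaces sum to zero, forcing \<open>z\<^sub>1 = z\<^sub>2\<close>.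
\<close>

lemma sum_UNIV_card_1:
  assumes "CARD('n::finite) = 1"
  shows "(\<Sum>j\<in>UNIV. f j) = f (i :: 'n)"
proof -
  have "(UNIV :: 'n set) = {i}" using assms by (metis card_1_singletonE singletonD UNIV_I)
  then show ?thesis by (metis sum.insert_if finite.emptyI empty_iff sum.empty add.right_neutral)
qed

lemma sum_if_mem_const:
  fixes b :: "'a::comm_semiring_1"
  shows "(\<Sum>k\<in>(UNIV::'n::finite set). if k \<in> K then b else f k) = of_nat (card K) * b + (\<Sum>l\<in>UNIV - K. f l)"
proof -
  have "(\<Sum>k\<in>(UNIV::'n set). if k \<in> K then b else f k) = (\<Sum>k\<in>K. b) + (\<Sum>l\<in>UNIV - K. f l)"
    by (subst sum.If_cases) (auto simp: Int_def Diff_eq)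
  then show ?thesis by simp
qed

lemma ex_min_component:
  fixes u :: "'a::linorder^'n::finite"
  obtains i where "\<And>j. u $ i \<le> u $ j"
proof -
  have "finite (range (\<lambda>j. u $ j))" "range (\<lambda>j. u $ j) \<noteq> {}" by auto
  from Min_in[OF this] obtain i where "u $ i = Min (range (\<lambda>j. u $ j))" by (metis rangeE)
  moreover have "Min (range (\<lambda>j. u $ j)) \<le> u $ j" for j by (rule Min_le) auto
  ultimately show ?thesis using that by metis
qed

lemma convex_combination_eq_upper_bound:
  fixes p q c t :: real
  assumes "0 < t" "t < 1" "p \<le> c" "q \<le> c" "(1 - t) * p + t * q = c"
  shows "p = c \<and> q = c"
proof -
  have "0 \<le> (1 - t) * (c - p)" "0 \<le> t * (c - q)" using assms by simp_all
  moreover have "(1 - t) * (c - p) + t * (c - q) = 0" using assms(5) by (simp add: algebra_simps)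
  ultimately have "(1 - t) * (c - p) = 0" "t * (c - q) = 0" by linarith+
  then show ?thesis using assms(1,2) by simp
qed

lemma eventually_nonneg_affine:
  fixes a b :: real
  assumes "0 \<le> a" and "a = 0 \<Longrightarrow> b = 0"
  shows "\<forall>\<^sub>F e in nhds 0. 0 \<le> a + e * b"
proof (cases "a = 0")
  case True
  then show ?thesis using assms(2) by simp
next
  case False
  then have "\<forall>\<^sub>F e in nhds 0. 0 < a + e * b"
    using assms(1) by (intro order_tendstoD(1)[of _ a]) (auto intro!: tendsto_eq_intros filterlim_ident)
  then show ?thesis by (rule eventually_mono) simp
qed

lemma not_extreme_point_if_eventually_mem:
  fixes v d :: "'a::real_normed_vector"
  assumes "d \<noteq> 0" and "\<forall>\<^sub>F e in nhds 0. v + e *\<^sub>R d \<in> S"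
  shows "\<not> v extreme_point_of S"
proof -
  obtain \<epsilon> where "\<epsilon> > 0" and \<epsilon>: "\<And>e. \<bar>e\<bar> < \<epsilon> \<Longrightarrow> v + e *\<^sub>R d \<in> S"
    using assms(2) unfolding eventually_nhds_metric dist_real_def by auto
  define x where "x = v + (\<epsilon> / 2) *\<^sub>R d"
  define y where "y = v + (- \<epsilon> / 2) *\<^sub>R d"
  have "x - y = \<epsilon> *\<^sub>R d" unfolding x_def y_def by (simp flip: scaleR_left_distrib)
  then have "x \<noteq> y" using assms(1) \<open>\<epsilon> > 0\<close> by auto
  moreover have "v = midpoint x y" by (simp add: x_def y_def midpoint_def algebra_simps flip: scaleR_left_distrib)
  ultimately have "v \<in> open_segment x y" using midpoint_in_open_segment by metis
  moreover have "x \<in> S" "y \<in> S" unfolding x_def y_def using \<open>\<epsilon> > 0\<close> by (intro \<epsilon>; simp)+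
  ultimately show ?thesis unfolding extreme_point_of_def by blast
qed

definition slackH :: "real \<Rightarrow> real^'n \<Rightarrow> 'n \<Rightarrow> real" where
  "slackH m z i = (2 * real CARD('n) - 2) * z $ i - (real CARD('n) - 2) * m - (\<Sum>j\<in>UNIV. z $ j)"

definition boxH :: "real \<Rightarrow> real^'n \<Rightarrow> (real^'n) set" where
  "boxH m u = {z. \<forall>k. m \<le> z $ k \<and> z $ k \<le> u $ k \<and> 0 \<le> slackH m z k}"

definition vertexB :: "real \<Rightarrow> real^'n \<Rightarrow> 'n set \<Rightarrow> real" where
  "vertexB m u K = ((real CARD('n) - 2) * m + (\<Sum>l\<in>UNIV - K. u $ l))
                  / (2 * real CARD('n) - 2 - real (card K))"

definition vertexZ :: "real \<Rightarrow> real^'n \<Rightarrow> 'n set \<Rightarrow> real^'n" where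
  "vertexZ m u K = (\<chi> k. if k \<in> K then vertexB m u K else u $ k)"

lemma polyP_eq_boxH: "polyP m M a = boxH m (\<chi> k. upperM m M a k)"
  unfolding polyP_def boxH_def slackH_def by auto

lemma zK_eq_vertexZ:
  fixes a :: "real^'n::finite"
  shows "zK m M a K = vertexZ m (\<chi> k. upperM m M a k) K"
  unfolding zK_def vertexZ_def vertexB_def Bval_def vec_lambda_beta vec.vec_lambda_inverse[OF UNIV_I] ..

lemma polytope_boxH:
  fixes u :: "real^'n::finite"
  shows "polytope (boxH m u)"
proof -
  define c where "c = 2 * real CARD('n) - 2"
  define w :: "'n \<Rightarrow> real^'n" where "w i = (\<chi> j. 1 - (if j = i then c else 0))" for i
  have w_inner: "w i \<bullet> z = (\<Sum>j\<in>UNIV. z $ j) - c * z $ i" for i z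
  proof -
    have "w i \<bullet> z = (\<Sum>j\<in>UNIV. z $ j - (if j = i then c * z $ j else 0))"
      unfolding w_def inner_vec_def by (intro sum.cong) (auto simp: algebra_simps)
    then show ?thesis by (simp add: sum_subtractf)
  qed
  have "boxH m u = cbox (\<chi> k. m) u \<inter> (\<Inter>i. {z. w i \<bullet> z \<le> - ((real CARD('n) - 2) * m)})"
    unfolding boxH_def slackH_def w_inner c_def by (auto simp: mem_box_cart algebra_simps)
  also have "polytope \<dots>"
    by (intro polytope_Int_polyhedron polytope_interval polyhedron_Inter)
       (auto simp: polyhedron_halfspace_le)
  finally show ?thesis .
qed

lemma slackH_add_scaleR: "slackH m (v + e *\<^sub>R d) i = slackH m v i + e * slackH 0 d i"
  unfolding slackH_def by (simp add: sum.distrib sum_distrib_left algebra_simps)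

lemma slackH_convex_combination:
  "slackH m ((1 - t) *\<^sub>R x + t *\<^sub>R y) i = (1 - t) * slackH m x i + t * slackH m y i"
proof -
  have "(\<Sum>j\<in>UNIV. ((1 - t) *\<^sub>R x + t *\<^sub>R y) $ j) = (1 - t) * (\<Sum>j\<in>UNIV. x $ j) + t * (\<Sum>j\<in>UNIV. y $ j)"
    by (simp add: sum.distrib sum_distrib_left)
  then show ?thesis unfolding slackH_def by (simp add: algebra_simps)
qed

lemma sum_slackH:
  fixes z :: "real^'n::finite"
  shows "(\<Sum>i\<in>UNIV. slackH m z i) = (real CARD('n) - 2) * ((\<Sum>j\<in>UNIV. z $ j) - real CARD('n) * m)"
proof -
  define N where "N = real CARD('n)"
  have "(\<Sum>i\<in>UNIV. slackH m z i)
      = (2 * N - 2) * (\<Sum>j\<in>UNIV. z $ j) - N * ((N - 2) * m) - N * (\<Sum>j\<in>UNIV. z $ j)"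
    unfolding slackH_def N_def by (simp add: sum_subtractf sum_distrib_left)
  then show ?thesis unfolding N_def by (simp add: algebra_simps)
qed

lemma ge_if_slackH_nonneg:
  fixes z :: "real^'n::finite"
  assumes "CARD('n) > 2" and "\<And>i. 0 \<le> slackH m z i"
  shows "m \<le> z $ k"
proof -
  define N where "N = real CARD('n)"
  have "0 \<le> (\<Sum>i\<in>UNIV. slackH m z i)" by (rule sum_nonneg) (use assms(2) in auto)
  then have "N * m \<le> (\<Sum>j\<in>UNIV. z $ j)"
    using assms(1) unfolding sum_slackH N_def by (simp add: zero_le_mult_iff)
  then have "(2 * N - 2) * m \<le> (2 * N - 2) * z $ k"
    using assms(2)[of k] unfolding slackH_def N_def by (simp add: algebra_simps)
  then show ?thesis using assms(1) unfolding N_def by (simp add: mult_le_cancel_left)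
qed

lemma mem_boxH_iff:
  fixes u z :: "real^'n::finite"
  assumes "CARD('n) > 2"
  shows "z \<in> boxH m u \<longleftrightarrow> (\<forall>k. z $ k \<le> u $ k \<and> 0 \<le> slackH m z k)"
  using ge_if_slackH_nonneg[OF assms] unfolding boxH_def by blast

lemma upperM_ge:
  fixes a :: "real^'n::finite"
  assumes "m \<le> M" and "\<And>j. m \<le> a $ j"
  shows "m \<le> upperM m M a i"
proof -
  define N where "N = real CARD('n)"
  have N1: "1 \<le> N" unfolding N_def by simp
  have sum_ge: "N * m \<le> (\<Sum>j\<in>UNIV. a $ j)"
    unfolding N_def by (rule sum_bounded_below) (use assms(2) in auto)
  have "N * m \<le> m + (N - 1) * M" using mult_left_mono[OF assms(1), of "N - 1"] N1
    by (simp add: algebra_simps)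
  moreover have "N * m \<le> (N - 2) * (a $ i - m) + (\<Sum>j\<in>UNIV. a $ j)"
  proof (cases "CARD('n) = 1")
    case True
    then have "(\<Sum>j\<in>UNIV. a $ j) = a $ i" by (rule sum_UNIV_card_1)
    then show ?thesis using True unfolding N_def by simp
  next
    case False
    have "0 < CARD('n)" by simp
    then have "2 \<le> N" using False unfolding N_def by linarith
    then have "0 \<le> (N - 2) * (a $ i - m)" using assms(2)[of i] by simp
    then show ?thesis using sum_ge by linarith
  qed
  ultimately show ?thesis using N1 unfolding upperM_def N_def[symmetric] by (simp add: field_simps)
qed

lemma slackH_upperM_nonneg:
  fixes a :: "real^'n::finite"
  assumes "2 \<le> CARD('n)" and "m \<le> M" and "\<And>j. m \<le> a $ j"
  shows "0 \<le> slackH m (\<chi> k. upperM m M a k) i"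
proof -
  define N where "N = real CARD('n)"
  define s where "s = (\<Sum>j\<in>UNIV. a $ j)"
  define A where "A = m + (N - 1) * M"
  define B where "B j = (N - 2) * (a $ j - m) + s" for j
  have N2: "2 \<le> N" using assms(1) unfolding N_def by simp
  have u: "upperM m M a j = min A (B j) / N" for j
    unfolding upperM_def A_def B_def N_def s_def by simp
  have "(\<Sum>j\<in>UNIV. upperM m M a j) \<le> (\<Sum>j\<in>(UNIV::'n set). A / N)"
    by (rule sum_mono) (use N2 in \<open>simp add: u divide_right_mono\<close>)
  then have sum_le_A: "(\<Sum>j\<in>UNIV. upperM m M a j) \<le> A" using N2 by (simp add: N_def)
  have "(\<Sum>j\<in>UNIV. upperM m M a j) \<le> (\<Sum>j\<in>UNIV. B j / N)"
    by (rule sum_mono) (use N2 in \<open>simp add: u divide_right_mono\<close>)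
  also have "\<dots> = ((N - 2) * (s - N * m) + N * s) / N"
    unfolding B_def s_def N_def sum_divide_distrib[symmetric]
    by (simp add: sum.distrib sum_distrib_left sum_subtractf algebra_simps)
  finally have sum_le_B: "(\<Sum>j\<in>UNIV. upperM m M a j) \<le> ((N - 2) * (s - N * m) + N * s) / N" .
  have "0 \<le> (N - 2) * ((N - 1) * (M - m))" using N2 assms(2) by simp
  then have "N * A \<le> (2 * N - 2) * A - N * (N - 2) * m" unfolding A_def by (simp add: algebra_simps)
  then have A_le: "A \<le> (2 * N - 2) * (A / N) - (N - 2) * m" using N2 by (simp add: field_simps)
  have "0 \<le> (2 * N - 2) * (N - 2) * (a $ i - m)" using N2 assms(3)[of i] by simp
  then have "(N - 2) * (s - N * m) + N * s \<le> (2 * N - 2) * B i - N * (N - 2) * m"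
    unfolding B_def by (simp add: algebra_simps)
  then have "((N - 2) * (s - N * m) + N * s) / N \<le> ((2 * N - 2) * B i - N * (N - 2) * m) / N"
    using N2 by (simp add: divide_right_mono)
  also have "\<dots> = (2 * N - 2) * (B i / N) - (N - 2) * m" using N2 by (simp add: field_simps)
  finally have B_le: "((N - 2) * (s - N * m) + N * s) / N \<le> (2 * N - 2) * (B i / N) - (N - 2) * m" .
  have "(\<Sum>j\<in>UNIV. upperM m M a j) \<le> (2 * N - 2) * upperM m M a i - (N - 2) * m"
    unfolding u[of i] using sum_le_A sum_le_B A_le B_le by (cases "A \<le> B i") (simp_all add: min_def)
  then show ?thesis unfolding slackH_def N_def by simp
qed

lemma upperM_card_2:
  fixes a :: "real^'n::finite"
  assumes "CARD('n) = 2"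
  shows "upperM m M a i = upperM m M a j"
  unfolding upperM_def using assms by simp

lemma vertexB_denominator_pos:
  fixes K :: "'n::finite set"
  assumes "CARD('n) > 2"
  shows "0 < 2 * real CARD('n) - 2 - real (card K)"
proof -
  have "card K \<le> CARD('n)" by (rule card_mono) auto
  then show ?thesis using assms by linarith
qed

lemma slackH_vertexZ:
  fixes u :: "real^'n::finite"
  assumes "CARD('n) > 2"
  shows "slackH m (vertexZ m u K) k = (2 * real CARD('n) - 2) * (vertexZ m u K $ k - vertexB m u K)"
proof -
  define N where "N = real CARD('n)"
  have "(2 * N - 2 - real (card K)) * vertexB m u K = (N - 2) * m + (\<Sum>l\<in>UNIV - K. u $ l)"
    using vertexB_denominator_pos[OF assms, of K] unfolding vertexB_def N_def by simp
  moreover have "(\<Sum>j\<in>UNIV. vertexZ m u K $ j) = real (card K) * vertexB m u K + (\<Sum>l\<in>UNIV - K. u $ l)"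
    unfolding vertexZ_def by (simp add: sum_if_mem_const)
  ultimately show ?thesis unfolding slackH_def N_def[symmetric] by (simp add: algebra_simps)
qed

lemma vertexB_le:
  fixes u :: "real^'n::finite"
  assumes "CARD('n) > 2" and "\<And>i. 0 \<le> slackH m u i"
  shows "vertexB m u K \<le> u $ k"
proof -
  define N where "N = real CARD('n)"
  obtain i where i_min: "\<And>j. u $ i \<le> u $ j" using ex_min_component[of u] by blast
  have "(\<Sum>j\<in>K. u $ i) \<le> (\<Sum>j\<in>K. u $ j)" by (rule sum_mono) (rule i_min)
  moreover have "(\<Sum>j\<in>UNIV. u $ j) = (\<Sum>l\<in>UNIV - K. u $ l) + (\<Sum>j\<in>K. u $ j)"
    by (rule sum.subset_diff) auto
  ultimately have "(N - 2) * m + (\<Sum>l\<in>UNIV - K. u $ l) \<le> (2 * N - 2 - real (card K)) * u $ i"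
    using assms(2)[of i] unfolding slackH_def N_def by (simp add: algebra_simps)
  then have "vertexB m u K \<le> u $ i"
    using vertexB_denominator_pos[OF assms(1), of K]
    unfolding vertexB_def N_def by (simp add: divide_le_eq mult.commute)
  then show ?thesis using i_min[of k] by linarith
qed

lemma vertexZ_mem_boxH:
  fixes u :: "real^'n::finite"
  assumes "CARD('n) > 2" and "\<And>i. 0 \<le> slackH m u i"
  shows "vertexZ m u K \<in> boxH m u"
proof -
  have upper: "vertexZ m u K $ k \<le> u $ k" for k
    using vertexB_le[OF assms] by (simp add: vertexZ_def)
  have slack: "0 \<le> slackH m (vertexZ m u K) k" for k
    unfolding slackH_vertexZ[OF assms(1)] using vertexB_le[OF assms, of K k] assms(1)
    by (simp add: vertexZ_def)
  show ?thesis unfolding boxH_def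
    using upper slack ge_if_slackH_nonneg[OF assms(1) slack] by blast
qed

lemma vertexZ_unique:
  fixes u v :: "real^'n::finite"
  assumes "CARD('n) > 2"
    and upper: "\<And>l. l \<notin> K \<Longrightarrow> v $ l = u $ l"
    and tight: "\<And>k. k \<in> K \<Longrightarrow> slackH m v k = 0"
  shows "v = vertexZ m u K"
proof -
  define N where "N = real CARD('n)"
  define \<beta> where "\<beta> = ((\<Sum>j\<in>UNIV. v $ j) + (N - 2) * m) / (2 * N - 2)"
  have N_gt: "2 < N" using assms(1) unfolding N_def by simp
  have v_K: "v $ k = \<beta>" if "k \<in> K" for k
    using tight[OF that] N_gt unfolding slackH_def \<beta>_def N_def by (simp add: field_simps)
  have "(\<Sum>j\<in>UNIV. v $ j) = (\<Sum>j\<in>UNIV. if j \<in> K then \<beta> else u $ j)"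
    using v_K upper by (intro sum.cong) auto
  then have "(2 * N - 2 - real (card K)) * \<beta> = (N - 2) * m + (\<Sum>l\<in>UNIV - K. u $ l)"
    using N_gt unfolding \<beta>_def by (simp add: sum_if_mem_const field_simps)
  then have "\<beta> = vertexB m u K"
    using vertexB_denominator_pos[OF assms(1), of K] unfolding vertexB_def N_def by (simp add: field_simps)
  then show ?thesis using v_K upper by (simp add: vec_eq_iff vertexZ_def)
qed

lemma vertexZ_extreme_point_of_boxH:
  fixes u :: "real^'n::finite"
  assumes "CARD('n) > 2" and "\<And>i. 0 \<le> slackH m u i"
  shows "vertexZ m u K extreme_point_of boxH m u"
proof -
  define z where "z = vertexZ m u K"
  have "x = z \<and> y = z"
    if x: "x \<in> boxH m u" and y: "y \<in> boxH m u" and t: "0 < t" "t < 1"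
      and z_comb: "z = (1 - t) *\<^sub>R x + t *\<^sub>R y" for x y t
  proof -
    have upper: "x $ l = u $ l \<and> y $ l = u $ l" if "l \<notin> K" for l
    proof (rule convex_combination_eq_upper_bound[OF t])
      show "x $ l \<le> u $ l" "y $ l \<le> u $ l" using x y unfolding boxH_def by auto
      have "(1 - t) * x $ l + t * y $ l = z $ l" using z_comb by simp
      also have "\<dots> = u $ l" using that by (simp add: z_def vertexZ_def)
      finally show "(1 - t) * x $ l + t * y $ l = u $ l" .
    qed
    have tight: "slackH m x k = 0 \<and> slackH m y k = 0" if "k \<in> K" for k
    proof -
      have "slackH m z k = 0"
        unfolding z_def slackH_vertexZ[OF assms(1)] using that by (simp add: vertexZ_def)
      have "- slackH m x k = 0 \<and> - slackH m y k = 0"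
      proof (rule convex_combination_eq_upper_bound[OF t])
        show "- slackH m x k \<le> 0" "- slackH m y k \<le> 0" using x y unfolding boxH_def by auto
        show "(1 - t) * - slackH m x k + t * - slackH m y k = 0"
          using \<open>slackH m z k = 0\<close> z_comb slackH_convex_combination[of m t x y k] by simp
      qed
      then show ?thesis by simp
    qed
    have "x = z" "y = z"
      unfolding z_def by (rule vertexZ_unique[OF assms(1)]; use upper tight in blast)+
    then show ?thesis by simp
  qed
  then show ?thesis
    using vertexZ_mem_boxH[OF assms] unfolding extreme_point_of_def in_segment z_def by metis
qed

lemma not_extreme_point_of_boxH_if_slack:
  fixes u v :: "real^'n::finite"
  assumes N: "CARD('n) > 2" and hu: "\<And>j. 0 \<le> slackH m u j" and v: "v \<in> boxH m u"
    and below: "v $ i < u $ i" and slack: "0 < slackH m v i"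
  shows "\<not> v extreme_point_of boxH m u"
proof -
  define N where "N = real CARD('n)"
  define T where "T = {j. slackH m v j = 0}"
  \<comment> \<open>raising \<open>z\<^sub>i\<close> by 1 and each \<open>z\<^sub>j\<close>, \<open>j \<in> T\<close>, by \<open>\<alpha>\<close> raises \<open>\<beta>(z)\<close> by exactly \<open>\<alpha>\<close>\<close>
  define \<alpha> where "\<alpha> = 1 / (2 * N - 2 - real (card T))"
  define d :: "real^'n" where "d = (\<chi> j. (if j = i then 1 else 0) + (if j \<in> T then \<alpha> else 0))"
  have v_le: "v $ k \<le> u $ k" and v_slack: "0 \<le> slackH m v k" for k
    using v unfolding mem_boxH_iff[OF N] by auto
  have "i \<notin> T" using slack unfolding T_def by simp
  have T_below: "v $ j < u $ j" if "j \<in> T" for j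
  proof (rule ccontr)
    assume "\<not> v $ j < u $ j"
    then have "v $ j = u $ j" using v_le[of j] by simp
    have "(\<Sum>k\<in>UNIV. v $ k) < (\<Sum>k\<in>UNIV. u $ k)"
      by (rule sum_strict_mono_ex1) (use v_le below in auto)
    then have "slackH m u j < slackH m v j" using \<open>v $ j = u $ j\<close> unfolding slackH_def by simp
    then show False using hu[of j] that unfolding T_def by simp
  qed
  have d_tight: "slackH 0 d j = 0" if "j \<in> T" for j
  proof -
    have "(\<Sum>k\<in>UNIV. d $ k) = 1 + real (card T) * \<alpha>"
      unfolding d_def by (simp add: sum.distrib sum_if_mem_const[where f = "\<lambda>_. 0", simplified])
    moreover have "d $ j = \<alpha>" using that \<open>i \<notin> T\<close> unfolding d_def by auto
    moreover have "(2 * N - 2 - real (card T)) * \<alpha> = 1"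
      using vertexB_denominator_pos[OF N, of T] unfolding \<alpha>_def N_def by simp
    ultimately show ?thesis unfolding slackH_def N_def by (simp add: algebra_simps)
  qed
  have "\<forall>\<^sub>F e in nhds 0. \<forall>k. 0 \<le> (u $ k - v $ k) + e * - d $ k \<and> 0 \<le> slackH m v k + e * slackH 0 d k"
  proof (intro eventually_all_finite eventually_conj eventually_nonneg_affine)
    fix k
    show "0 \<le> u $ k - v $ k" "0 \<le> slackH m v k" using v_le v_slack by simp_all
    show "- d $ k = 0" if "u $ k - v $ k = 0"
      using that below T_below[of k] unfolding d_def by auto
    show "slackH 0 d k = 0" if "slackH m v k = 0"
      using that d_tight unfolding T_def by simp
  qed
  then have "\<forall>\<^sub>F e in nhds 0. v + e *\<^sub>R d \<in> boxH m u"
    by (rule eventually_mono) (simp add: mem_boxH_iff[OF N] slackH_add_scaleR algebra_simps)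
  moreover have "d \<noteq> 0" using \<open>i \<notin> T\<close> by (auto simp: d_def vec_eq_iff)
  ultimately show ?thesis using not_extreme_point_if_eventually_mem by blast
qed

lemma extreme_points_boxH:
  fixes u :: "real^'n::finite"
  assumes N: "CARD('n) > 2" and hu: "\<And>j. 0 \<le> slackH m u j"
  shows "{v. v extreme_point_of boxH m u} = vertexZ m u ` Pow UNIV"
proof (intro equalityI subsetI)
  fix v assume "v \<in> {v. v extreme_point_of boxH m u}"
  then have ext: "v extreme_point_of boxH m u" by simp
  then have v: "v \<in> boxH m u" by (simp add: extreme_point_of_def)
  define K where "K = {k. v $ k < u $ k}"
  have "v = vertexZ m u K"
  proof (rule vertexZ_unique[OF N])
    show "v $ l = u $ l" if "l \<notin> K" for l
    proof -
      have "v $ l \<le> u $ l" using v unfolding boxH_def by blast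
      then show ?thesis using that unfolding K_def by simp
    qed
    show "slackH m v k = 0" if "k \<in> K" for k
    proof -
      have "0 \<le> slackH m v k" using v unfolding boxH_def by blast
      moreover have "\<not> 0 < slackH m v k"
        using that ext not_extreme_point_of_boxH_if_slack[OF N hu v, of k] unfolding K_def by blast
      ultimately show ?thesis by simp
    qed
  qed
  then show "v \<in> vertexZ m u ` Pow UNIV" by blast
qed (use vertexZ_extreme_point_of_boxH[OF assms] in auto)

lemma extreme_points_polyP:
  fixes a :: "real^'n::finite"
  assumes "CARD('n) > 2" and "m \<le> M" and "\<And>j. m \<le> a $ j"
  shows "{v. v extreme_point_of polyP m M a} = zK m M a ` Pow UNIV"
proof -
  have "\<And>j. 0 \<le> slackH m (\<chi> k. upperM m M a k) j"
    using assms by (intro slackH_upperM_nonneg) simp_all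
  moreover have "zK m M a = vertexZ m (\<chi> k. upperM m M a k)" by (simp add: fun_eq_iff zK_eq_vertexZ)
  ultimately show ?thesis unfolding polyP_eq_boxH by (simp only: extreme_points_boxH[OF assms(1)])
qed

lemma boxH_card_1:
  fixes u :: "real^'n::finite"
  assumes "CARD('n) = 1" and "\<And>k. m \<le> u $ k"
  shows "boxH m u = {\<chi> k. m}"
proof -
  have slack: "slackH m z k = m - z $ k" for z :: "real^'n" and k
    using assms(1) sum_UNIV_card_1[OF assms(1), of "\<lambda>j. z $ j" k] unfolding slackH_def by simp
  show ?thesis
  proof (intro equalityI subsetI)
    fix z assume "z \<in> boxH m u"
    then have "m \<le> z $ k \<and> 0 \<le> m - z $ k" for k unfolding boxH_def slack by blast
    then have "z $ k = m" for k by (meson antisym diff_ge_0_iff_ge)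
    then show "z \<in> {\<chi> k. m}" by (simp add: vec_eq_iff)
  next
    fix z :: "real^'n" assume "z \<in> {\<chi> k. m}"
    then show "z \<in> boxH m u" using assms(2) unfolding boxH_def slack by simp
  qed
qed

lemma boxH_card_2:
  fixes u :: "real^'n::finite"
  assumes "CARD('n) = 2" and "\<And>k. u $ k = c"
  shows "boxH m u = {(\<chi> k. t) | t. m \<le> t \<and> t \<le> c}"
proof (intro equalityI subsetI)
  fix z assume z: "z \<in> boxH m u"
  define t where "t = (\<Sum>j\<in>UNIV. z $ j) / 2"
  have "0 \<le> slackH m z i" for i using z unfolding boxH_def by blast
  moreover have "(\<Sum>i\<in>UNIV. slackH m z i) = 0" using assms(1) by (simp add: sum_slackH)
  ultimately have "slackH m z i = 0" for i using sum_nonneg_eq_0_iff[of UNIV "slackH m z"] by simp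
  then have z_t: "z $ i = t" for i using assms(1) unfolding slackH_def t_def by (simp add: field_simps)
  then have "z = (\<chi> k. t)" by (simp add: vec_eq_iff)
  moreover have "m \<le> t \<and> t \<le> c"
  proof -
    fix i :: 'n
    show ?thesis using z assms(2) z_t[of i] unfolding boxH_def by auto
  qed
  ultimately show "z \<in> {(\<chi> k. t) | t. m \<le> t \<and> t \<le> c}" by blast
next
  fix z :: "real^'n" assume "z \<in> {(\<chi> k. t) | t. m \<le> t \<and> t \<le> c}"
  then obtain t where "z = (\<chi> k. t)" "m \<le> t" "t \<le> c" by blast
  then show "z \<in> boxH m u" using assms unfolding boxH_def slackH_def by simp
qed

theorem proposition8:
  fixes m M :: real and a :: "real^'n"
  assumes "0 < m" "m < M" "M < 1"
    and "\<And>i. a $ i \<in> {m..M}"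
  shows "polytope (polyP m M a) \<and> closed (polyP m M a) \<and> convex (polyP m M a)
    \<and> (CARD('n) > 2 \<longrightarrow>
          {v. v extreme_point_of (polyP m M a)} = zK m M a ` Pow UNIV
        \<and> card {v. v extreme_point_of (polyP m M a)} \<le> 2 ^ CARD('n))
    \<and> (CARD('n) = 1 \<longrightarrow> polyP m M a = {\<chi> k. m})
    \<and> (CARD('n) = 2 \<longrightarrow> (\<forall>i. polyP m M a = {(\<chi> k. t) | t. m \<le> t \<and> t \<le> upperM m M a i}))"
proof -
  define u where "u = (\<chi> k. upperM m M a k)"
  have P: "polyP m M a = boxH m u" unfolding u_def by (rule polyP_eq_boxH)
  have a_ge: "\<And>j. m \<le> a $ j" and "m \<le> M" using assms(2,4) by auto
  have u_ge: "\<And>k. m \<le> u $ k" unfolding u_def using upperM_ge[OF \<open>m \<le> M\<close> a_ge] by simp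
  have poly: "polytope (polyP m M a)" unfolding P by (rule polytope_boxH)
  moreover have "{v. v extreme_point_of (polyP m M a)} = zK m M a ` Pow UNIV
      \<and> card {v. v extreme_point_of (polyP m M a)} \<le> 2 ^ CARD('n)" if "CARD('n) > 2"
    using extreme_points_polyP[OF that \<open>m \<le> M\<close> a_ge] card_image_le[of "Pow UNIV" "zK m M a"]
    by (simp add: card_Pow)
  moreover have "polyP m M a = {\<chi> k. m}" if "CARD('n) = 1"
    unfolding P using boxH_card_1[OF that u_ge] .
  moreover have "polyP m M a = {(\<chi> k. t) | t. m \<le> t \<and> t \<le> upperM m M a i}" if "CARD('n) = 2" for i
    unfolding P
  proof (rule boxH_card_2[OF that])
    show "u $ k = upperM m M a i" for k unfolding u_def vec_lambda_beta by (rule upperM_card_2[OF that])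
  qed
  ultimately show ?thesis using polytope_imp_closed[OF poly] polytope_imp_convex[OF poly] by blast
qed

end
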